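(* Let $K\in\{\mathbb R,\mathbb C,\mathbb H\}$ and let $(E,d)$ be a metric vector space over $K$ such that $d$ is asymptotically multiplicative, unbounded on every non-trivial linear subspace, and such that for every $C_1>1$ there exists $C_0\ge0$ with $d\big(\sum_{i=1}^n x_i,\sum_{i=1}^n y_i\big)\le C_1\sum_{i=1}^n d(x_i,y_i)+nC_0$ for all $n\ge2$ and $x_1,\dots,x_n,y_1,\dots,y_n\in E$. Let $d_0(x,y)=\int_{\mathbb U}d(ux,uy)\,d\mu(u)$ and $\delta_0(x,y)=\lim_{n\to+\infty}\frac1n d_0(nx,ny)$. Then $\delta_0$ is translation invariant, i.e. $\delta_0(x+z,y+z)=\delta_0(x,y)$ for all $x,y,z\in E$, and setting $\|x-y\|=\delta_0(x,y)$ defines a norm $\|\cdot\|$ on $E$ such that the distance $\|x-y\|$ is asymptotically isometric to $d_0$ and to $d$.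
   Context: A metric vector space is a topological vector space over $K$ whose topology is generated by the metric $d$. $\mathbb U=\{u\in K:|u|=1\}$, $\mu$ the right-invariant Haar probability measure on $\mathbb U$. $d$ is asymptotically multiplicative if for every $C_1>1$ there exist $C_2,C_3\ge0$ with $C_1^{-1}|\lambda|d(x,y)-C_2|\lambda|-C_3\le d(\lambda x,\lambda y)\le C_1|\lambda|d(x,y)+C_2|\lambda|+C_3$ for all $\lambda\in K$, $x,y\in E$. A distance $\rho$ is asymptotically isometric to a distance $\sigma$ if for every $A>1$ there is $B\ge0$ with $A^{-1}\sigma-B\le\rho\le A\sigma+B$ pointwise. (Under these hypotheses the limit defining $\delta_0$ exists.) *)

theory Defs
  imports "HOL-Analysis.Analysis" "HOL-Probability.Probability"
begin

definition left_vector_space :: "('k::ring_1 \<Rightarrow> 'e::ab_group_add \<Rightarrow> 'e) \<Rightarrow> bool" where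
  "left_vector_space smul \<longleftrightarrow>
     (\<forall>a x y. smul a (x + y) = smul a x + smul a y) \<and>
     (\<forall>a b x. smul (a + b) x = smul a x + smul b x) \<and>
     (\<forall>a b x. smul (a * b) x = smul a (smul b x)) \<and>
     (\<forall>x. smul 1 x = x)"

definition metric_vector_space ::
  "('k::real_normed_div_algebra \<Rightarrow> 'e::ab_group_add \<Rightarrow> 'e) \<Rightarrow> ('e \<Rightarrow> 'e \<Rightarrow> real) \<Rightarrow> bool" where
  "metric_vector_space smul d \<longleftrightarrow>
     left_vector_space smul \<and>
     Metric_space UNIV d \<and>
     continuous_map (prod_topology (Metric_space.mtopology UNIV d) (Metric_space.mtopology UNIV d))
        (Metric_space.mtopology UNIV d) (\<lambda>(x, y). x + y) \<and>
     continuous_map (prod_topology euclidean (Metric_space.mtopology UNIV d))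
        (Metric_space.mtopology UNIV d) (\<lambda>(a, x). smul a x)"

definition linear_subspace :: "('k::ring_1 \<Rightarrow> 'e::ab_group_add \<Rightarrow> 'e) \<Rightarrow> 'e set \<Rightarrow> bool" where
  "linear_subspace smul F \<longleftrightarrow> 0 \<in> F \<and> (\<forall>x\<in>F. \<forall>y\<in>F. x + y \<in> F) \<and> (\<forall>a. \<forall>x\<in>F. smul a x \<in> F)"

definition asymptotically_multiplicative ::
  "('k::real_normed_div_algebra \<Rightarrow> 'e \<Rightarrow> 'e) \<Rightarrow> ('e \<Rightarrow> 'e \<Rightarrow> real) \<Rightarrow> bool" where
  "asymptotically_multiplicative smul d \<longleftrightarrow>
     (\<forall>C1>1. \<exists>C2\<ge>0. \<exists>C3\<ge>0. \<forall>l x y.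
        d x y * norm l / C1 - C2 * norm l - C3 \<le> d (smul l x) (smul l y) \<and>
        d (smul l x) (smul l y) \<le> C1 * norm l * d x y + C2 * norm l + C3)"

definition asymptotically_isometric :: "('e \<Rightarrow> 'e \<Rightarrow> real) \<Rightarrow> ('e \<Rightarrow> 'e \<Rightarrow> real) \<Rightarrow> bool" where
  "asymptotically_isometric \<rho> \<sigma> \<longleftrightarrow>
     (\<forall>A>1. \<exists>B\<ge>0. \<forall>x y. \<sigma> x y / A - B \<le> \<rho> x y \<and> \<rho> x y \<le> A * \<sigma> x y + B)"

definition haar_prob_unit_sphere :: "'k::real_normed_div_algebra measure \<Rightarrow> bool" where
  "haar_prob_unit_sphere \<mu> \<longleftrightarrow>
     sets \<mu> = sets (restrict_space borel {u. norm u = 1}) \<and>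
     space \<mu> = {u. norm u = 1} \<and>
     prob_space \<mu> \<and>
     (\<forall>v. norm v = 1 \<longrightarrow> (\<forall>A\<in>sets \<mu>. emeasure \<mu> ((\<lambda>u. u * v) ` A) = emeasure \<mu> A))"

definition d0 :: "'k measure \<Rightarrow> ('k \<Rightarrow> 'e \<Rightarrow> 'e) \<Rightarrow> ('e \<Rightarrow> 'e \<Rightarrow> real) \<Rightarrow> 'e \<Rightarrow> 'e \<Rightarrow> real" where
  "d0 \<mu> smul d x y = (\<integral>u. d (smul u x) (smul u y) \<partial>\<mu>)"

definition delta0 ::
  "'k::real_normed_div_algebra measure \<Rightarrow> ('k \<Rightarrow> 'e \<Rightarrow> 'e) \<Rightarrow> ('e \<Rightarrow> 'e \<Rightarrow> real) \<Rightarrow> 'e \<Rightarrow> 'e \<Rightarrow> real" where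
  "delta0 \<mu> smul d x y = lim (\<lambda>n::nat. d0 \<mu> smul d (smul (of_nat n) x) (smul (of_nat n) y) / real n)"

definition is_norm :: "('k::real_normed_div_algebra \<Rightarrow> 'e::ab_group_add \<Rightarrow> 'e) \<Rightarrow> ('e \<Rightarrow> real) \<Rightarrow> bool" where
  "is_norm smul N \<longleftrightarrow>
     (\<forall>x. 0 \<le> N x) \<and> (\<forall>x. N x = 0 \<longleftrightarrow> x = 0) \<and>
     (\<forall>a x. N (smul a x) = norm a * N x) \<and> (\<forall>x y. N (x + y) \<le> N x + N y)"

end

theory Submission
  imports Defs
begin

text \<open>
  Averaging \<open>d\<close> over the unit sphere with the right-invariant Haar measure gives a distance
  \<open>d\<^sub>0\<close> that is invariant under unit scalars and inherits, with the same constants, the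
  asymptotic multiplicativity and the quasi-additivity of \<open>d\<close>. Hence \<open>b n = d\<^sub>0 (n x) (n y)\<close>
  is quasi-subadditive and quasi-homogeneous in \<open>n\<close>, and a Fekete-type argument shows that
  \<open>b n / n\<close> converges. Dividing by \<open>n\<close> kills all additive errors, so the limit \<open>\<delta>\<^sub>0\<close> is exactly
  translation invariant and exactly homogeneous for nonnegative real scalars, which are central
  in \<open>K\<close> and so commute with the averaging; as every scalar is such a real times a unit,
  \<open>\<delta>\<^sub>0\<close> is homogeneous for all scalars.
  Comparing \<open>\<delta>\<^sub>0\<close> with \<open>d\<^sub>0\<close> at scale \<open>n\<close> shows that it is asymptotically isometric to \<open>d\<^sub>0\<close>,
  hence to \<open>d\<close>; so if \<open>\<delta>\<^sub>0 x 0 = 0\<close> the line through \<open>x\<close> is \<open>d\<close>-bounded, which forces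
  \<open>x = 0\<close>.
\<close>

section \<open>Limits of quasi-subadditive sequences\<close>

lemma ratio_limit_le:
  fixes a b :: "nat \<Rightarrow> real"
  assumes a: "(\<lambda>n. a n / real n) \<longlonglongrightarrow> \<alpha>" and b: "(\<lambda>n. b n / real n) \<longlonglongrightarrow> \<beta>"
    and dominated: "\<And>C. C > 1 \<Longrightarrow> \<exists>e. \<forall>n. a n \<le> C * b n + e"
  shows "\<alpha> \<le> \<beta>"
proof (rule field_le_mult_one_interval)
  fix z :: real assume z: "0 < z" "z < 1"
  obtain e where e: "\<And>n. a n \<le> (1 / z) * b n + e"
    using dominated[of "1 / z"] z by auto
  have "(\<lambda>n. (1 / z) * (b n / real n) + e / real n) \<longlonglongrightarrow> (1 / z) * \<beta> + 0"
    by (intro tendsto_intros b)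
  moreover have "a n / real n \<le> (1 / z) * (b n / real n) + e / real n" for n
    using divide_right_mono[OF e[of n], of "real n"] by (simp add: add_divide_distrib)
  ultimately have "\<alpha> \<le> (1 / z) * \<beta>"
    using a by (intro LIMSEQ_le) auto
  then show "z * \<alpha> \<le> \<beta>"
    using z by (simp add: field_simps)
qed

lemma subseq_limit_le:
  fixes s :: "nat \<Rightarrow> real"
  assumes r: "strict_mono r" and lim: "(s \<circ> r) \<longlonglongrightarrow> l"
    and bound: "\<And>n. 1 \<le> n \<Longrightarrow> s n \<le> a + c / real n"
  shows "l \<le> a"
proof -
  have r_top: "filterlim r at_top sequentially"
    using r by (rule filterlim_subseq)
  have "(\<lambda>j. c / real (r j)) \<longlonglongrightarrow> 0"
    using filterlim_compose[OF lim_const_over_n r_top] .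
  then have "(\<lambda>j. a + c / real (r j)) \<longlonglongrightarrow> a + 0"
    by (intro tendsto_add tendsto_const)
  moreover have "eventually (\<lambda>j. (s \<circ> r) j \<le> a + c / real (r j)) sequentially"
    using eventually_compose_filterlim[OF eventually_ge_at_top[of 1] r_top]
    by (rule eventually_mono) (simp add: bound)
  ultimately show ?thesis
    using lim tendsto_le[OF trivial_limit_sequentially] by fastforce
qed

lemma convergent_approx_fekete:
  fixes s :: "nat \<Rightarrow> real"
  assumes bounded: "\<And>n. 0 \<le> s n \<and> s n \<le> M"
    and dominated: "\<And>C. C > 1 \<Longrightarrow>
      \<exists>D\<ge>0. \<forall>n m. 1 \<le> n \<longrightarrow> 1 \<le> m \<longrightarrow> s n \<le> C * s m + D / m + D * m / n"
  shows "convergent s"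
proof -
  have "bounded (range s)"
    using bounded by (intro boundedI[of _ M]) fastforce
  then obtain l r where r: "strict_mono r" and lim: "(s \<circ> r) \<longlonglongrightarrow> l"
    using bounded_imp_convergent_subsequence by blast
  have "s \<longlonglongrightarrow> l"
    unfolding tendsto_iff
  proof (intro allI impI)
    fix e :: real assume e: "e > 0"
    define C where "C = 1 + e / (4 * (M + 1))"
    have M: "M \<ge> 0" using bounded[of 0] by linarith
    then obtain D where D: "\<And>n m. 1 \<le> n \<Longrightarrow> 1 \<le> m \<Longrightarrow> s n \<le> C * s m + D / m + D * m / n"
      using dominated[of C] e by (auto simp: C_def)
    have C_close: "C * s n \<le> s n + e / 4" for n
    proof -
      have "(C - 1) * s n \<le> (C - 1) * M"
        using bounded[of n] e M by (intro mult_left_mono) (auto simp: C_def)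
      also have "\<dots> \<le> e / 4"
        using e M by (simp add: C_def field_simps)
      finally show ?thesis by (simp add: algebra_simps)
    qed
    have small: "eventually (\<lambda>n. c / real n < e / 4) sequentially" for c
      using order_tendstoD(2)[OF lim_const_over_n[of c], of "e / 4"] e by simp
    have r_top: "filterlim r at_top sequentially"
      using r by (rule filterlim_subseq)
    have l_le: "l \<le> s m + e / 4 + D / m" if "1 \<le> m" for m
      using subseq_limit_le[OF r lim, of "C * s m + D / m" "D * m"] D[OF _ that] C_close[of m]
      by fastforce
    obtain m where m: "1 \<le> m" "D / m < e / 4" "\<bar>s m - l\<bar> < e / 4"
    proof -
      have "eventually (\<lambda>j. 1 \<le> r j \<and> D / r j < e / 4 \<and> dist ((s \<circ> r) j) l < e / 4) sequentially"
        using e by (intro eventually_conj eventually_compose_filterlim[OF _ r_top] small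
            eventually_ge_at_top tendstoD[OF lim]) simp
      then show ?thesis
        using that by (auto simp: dist_real_def dest: eventually_happens)
    qed
    have "eventually (\<lambda>n. 1 \<le> n \<and> D / n < e / 4 \<and> D * m / n < e / 4) sequentially"
      by (intro eventually_conj eventually_ge_at_top small)
    then show "eventually (\<lambda>n. dist (s n) l < e) sequentially"
    proof (rule eventually_mono)
      fix n :: nat assume "1 \<le> n \<and> D / n < e / 4 \<and> D * m / n < e / 4"
      then have n: "1 \<le> n" "D / n < e / 4" "D * m / n < e / 4" by auto
      have "l < s n + e" using l_le[OF n(1)] n(2) e by linarith
      moreover have "s n < l + e" using D[of n m] C_close[of m] m n(1,3) by linarith
      ultimately show "dist (s n) l < e" by (simp add: dist_real_def abs_less_iff)
    qed
  qed
  then show ?thesis by (rule convergentI)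
qed

lemma quasi_subadditive_ratio_le:
  fixes b :: "nat \<Rightarrow> real"
  assumes nonneg: "\<And>n. 0 \<le> b n" and c: "0 \<le> c" and C0: "0 \<le> C0"
    and add: "\<And>s t. b (s + t) \<le> c * (b s + b t) + C0"
    and mult: "\<And>k m. b (k * m) \<le> c * real k * b m + real k * C0"
    and D: "c * (c * b 1 + C0) + C0 \<le> D"
    and n: "1 \<le> n" and m: "1 \<le> m"
  shows "b n / n \<le> c * c * (b m / m) + D / m + D * m / n"
proof -
  define k where "k = n div m"
  define r where "r = n mod m"
  have km: "real k * real m \<le> real n"
    by (simp add: k_def flip: of_nat_mult)
  have rm: "real r \<le> real m"
    using m by (simp add: r_def less_imp_le)
  define X where "X = c * b 1 + C0"
  have X: "C0 \<le> X" "c * X + C0 \<le> D"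
    using c C0 nonneg[of 1] D by (simp_all add: X_def)
  have cC0: "c * C0 \<le> D" "0 \<le> D"
    using mult_left_mono[OF X(1) c] mult_nonneg_nonneg[OF c C0] X(2) C0 by linarith+
  have "b n \<le> c * (b (k * m) + b (r * 1)) + C0"
    using add[of "k * m" r] by (simp add: k_def r_def)
  also have "\<dots> \<le> c * ((c * real k * b m + real k * C0) + (c * real r * b 1 + real r * C0)) + C0"
    using c by (intro add_mono mult_left_mono mult) simp_all
  also have "\<dots> = c * c * real k * b m + c * C0 * real k + c * X * real r + C0"
    by (simp add: X_def algebra_simps)
  finally have "b n * m \<le> (c * c * real k * b m + c * C0 * real k + c * X * real r + C0) * m"
    by (rule mult_right_mono) simp
  also have "\<dots> = c * c * b m * (k * m) + c * C0 * (k * m) + c * X * (r * m) + C0 * m"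
    by (simp add: algebra_simps)
  also have "\<dots> \<le> c * c * b m * n + D * n + D * (m * m)"
  proof -
    have "c * c * b m * (k * m) \<le> c * c * b m * n"
      using km c nonneg[of m] by (intro mult_left_mono) simp_all
    moreover have "c * C0 * (k * m) \<le> D * n"
      using km c C0 cC0 by (intro mult_mono) simp_all
    moreover have "c * X * (r * m) \<le> c * X * (m * m)"
      using rm c X C0 by (intro mult_left_mono mult_right_mono) (simp_all add: mult_right_mono)
    moreover have "C0 * m \<le> C0 * (m * m)"
      using m C0 by (intro mult_left_mono) simp_all
    moreover have "c * X * (m * m) + C0 * (m * m) \<le> D * (m * m)"
      using mult_right_mono[OF X(2), of "real m * real m"] by (simp add: distrib_right)
    ultimately show ?thesis by linarith
  qed
  finally have "b n * m / (n * m) \<le> (c * c * b m * n + D * n + D * (m * m)) / (n * m)"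
    by (rule divide_right_mono) simp
  then show ?thesis
    using n m by (simp add: field_simps)
qed

lemma convergent_quasi_subadditive_div:
  fixes b :: "nat \<Rightarrow> real"
  assumes nonneg: "\<And>n. 0 \<le> b n"
    and quasi: "\<And>C. C > 1 \<Longrightarrow> \<exists>C0\<ge>0. (\<forall>s t. b (s + t) \<le> C * (b s + b t) + C0) \<and>
                                        (\<forall>k m. b (k * m) \<le> C * real k * b m + real k * C0)"
  shows "convergent (\<lambda>n. b n / real n)"
proof -
  obtain C0 where C0: "C0 \<ge> 0" and mult: "\<And>k m. b (k * m) \<le> 2 * real k * b m + real k * C0"
    using quasi[of 2] by auto
  have bounded: "0 \<le> b n / real n \<and> b n / real n \<le> 2 * b 1 + C0" for n
  proof (cases "n = 0")
    case False
    have "b n \<le> real n * (2 * b 1 + C0)"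
      using mult[of n 1] by (simp add: algebra_simps)
    with False show ?thesis
      using nonneg[of n] by (simp add: divide_le_eq mult.commute)
  qed (use nonneg[of 1] C0 in simp)
  have dominated: "\<exists>D\<ge>0. \<forall>n m. 1 \<le> n \<longrightarrow> 1 \<le> m \<longrightarrow> b n / n \<le> C * (b m / m) + D / m + D * m / n"
    if "C > 1" for C
  proof -
    define c where "c = sqrt C"
    have c: "c > 1" "c * c = C"
      using \<open>C > 1\<close> by (simp_all add: c_def)
    obtain C0 where "C0 \<ge> 0" and "\<forall>s t. b (s + t) \<le> c * (b s + b t) + C0"
      and "\<forall>k m. b (k * m) \<le> c * real k * b m + real k * C0"
      using quasi[OF c(1)] by blast
    then show ?thesis
      using quasi_subadditive_ratio_le[of b c C0 "c * (c * b 1 + C0) + C0"] nonneg c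
      by (intro exI[of _ "c * (c * b 1 + C0) + C0"]) simp
  qed
  show ?thesis
    using bounded dominated by (rule convergent_approx_fekete)
qed

lemma asymptotically_isometric_trans:
  assumes \<rho>\<sigma>: "asymptotically_isometric \<rho> \<sigma>" and \<sigma>\<tau>: "asymptotically_isometric \<sigma> \<tau>"
  shows "asymptotically_isometric \<rho> \<tau>"
  unfolding asymptotically_isometric_def
proof (intro allI impI)
  fix A :: real assume A: "A > 1"
  define c where "c = sqrt A"
  have c: "c > 1" "c * c = A"
    using A by (simp_all add: c_def)
  obtain B1 where B1: "B1 \<ge> 0" "\<And>x y. \<sigma> x y / c - B1 \<le> \<rho> x y \<and> \<rho> x y \<le> c * \<sigma> x y + B1"
    using \<rho>\<sigma> c(1) unfolding asymptotically_isometric_def by blast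
  obtain B2 where B2: "B2 \<ge> 0" "\<And>x y. \<tau> x y / c - B2 \<le> \<sigma> x y \<and> \<sigma> x y \<le> c * \<tau> x y + B2"
    using \<sigma>\<tau> c(1) unfolding asymptotically_isometric_def by blast
  have "\<tau> x y / A - (c * B2 + B1) \<le> \<rho> x y \<and> \<rho> x y \<le> A * \<tau> x y + (c * B2 + B1)" for x y
  proof
    have "B2 \<le> c * B2"
      using mult_right_mono[of 1 c B2] c B2(1) by simp
    moreover from this have "B2 / c \<le> B2"
      using c by (simp add: divide_le_eq mult.commute)
    ultimately have "B2 / c \<le> c * B2"
      by linarith
    moreover have "(\<tau> x y / c - B2) / c = \<tau> x y / A - B2 / c"
      using c by (simp add: field_simps flip: c(2))
    ultimately have "\<tau> x y / A - c * B2 \<le> (\<tau> x y / c - B2) / c"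
      by linarith
    also have "\<dots> \<le> \<sigma> x y / c"
      using B2(2)[of x y] c by (simp add: divide_right_mono)
    finally show "\<tau> x y / A - (c * B2 + B1) \<le> \<rho> x y"
      using B1(2)[of x y] by linarith
    have "c * \<sigma> x y \<le> c * (c * \<tau> x y + B2)"
      using B2(2)[of x y] c by simp
    also have "\<dots> = A * \<tau> x y + c * B2"
      by (simp add: algebra_simps flip: c(2))
    finally show "\<rho> x y \<le> A * \<tau> x y + (c * B2 + B1)"
      using B1(2)[of x y] by linarith
  qed
  then show "\<exists>B\<ge>0. \<forall>x y. \<tau> x y / A - B \<le> \<rho> x y \<and> \<rho> x y \<le> A * \<tau> x y + B"
    using B1(1) B2(1) c(1) by (intro exI[of _ "c * B2 + B1"]) auto
qed

section \<open>Averaging the distance over the unit sphere\<close>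

lemma haar_prob_unit_sphere_measurable_mult_right:
  assumes haar: "haar_prob_unit_sphere \<mu>" and v: "norm v = 1"
  shows "(\<lambda>u. u * v) \<in> measurable \<mu> \<mu>"
proof -
  have sets: "sets \<mu> = sets (restrict_space borel {u. norm u = 1})"
    using haar by (simp add: haar_prob_unit_sphere_def)
  have "(\<lambda>u. u * v) \<in> measurable (restrict_space borel {u. norm u = 1}) (restrict_space borel {u. norm u = 1})"
    using v by (intro measurable_restrict_space3 borel_measurable_continuous_onI continuous_intros)
      (auto simp: norm_mult)
  then show ?thesis
    by (simp add: measurable_cong_sets[OF sets sets])
qed

lemma haar_prob_unit_sphere_distr_mult_right:
  assumes haar: "haar_prob_unit_sphere \<mu>" and v: "norm v = 1"
  shows "distr \<mu> \<mu> (\<lambda>u. u * v) = \<mu>"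
proof (rule measure_eqI)
  fix A assume "A \<in> sets (distr \<mu> \<mu> (\<lambda>u. u * v))"
  then have A: "A \<in> sets \<mu>" by simp
  have space: "space \<mu> = {u. norm u = 1}"
    using haar by (simp add: haar_prob_unit_sphere_def)
  have "v \<noteq> 0"
    using v by auto
  have "(\<lambda>u. u * v) -` A \<inter> space \<mu> = (\<lambda>u. u * inverse v) ` A"
  proof
    show "(\<lambda>u. u * v) -` A \<inter> space \<mu> \<subseteq> (\<lambda>u. u * inverse v) ` A"
      using \<open>v \<noteq> 0\<close> by (auto intro!: image_eqI[where x = "_ * v"] simp: mult.assoc)
    show "(\<lambda>u. u * inverse v) ` A \<subseteq> (\<lambda>u. u * v) -` A \<inter> space \<mu>"
      using sets.sets_into_space[OF A] v \<open>v \<noteq> 0\<close>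
      by (auto simp: mult.assoc space norm_mult norm_inverse)
  qed
  moreover have "norm (inverse v) = 1"
    using v by (simp add: norm_inverse)
  ultimately show "emeasure (distr \<mu> \<mu> (\<lambda>u. u * v)) A = emeasure \<mu> A"
    using haar A haar_prob_unit_sphere_measurable_mult_right[OF haar v]
    by (simp add: emeasure_distr haar_prob_unit_sphere_def)
qed simp

lemma haar_prob_unit_sphere_integral_mult_right:
  fixes f :: "'k::real_normed_div_algebra \<Rightarrow> real"
  assumes haar: "haar_prob_unit_sphere \<mu>" and v: "norm v = 1" and f: "f \<in> borel_measurable \<mu>"
  shows "(\<integral>u. f (u * v) \<partial>\<mu>) = integral\<^sup>L \<mu> f"
  using integral_distr[OF haar_prob_unit_sphere_measurable_mult_right[OF haar v] f]
  by (simp add: haar_prob_unit_sphere_distr_mult_right[OF haar v])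

locale left_vector_space_smul =
  fixes smul :: "'k::ring_1 \<Rightarrow> 'e::ab_group_add \<Rightarrow> 'e"
  assumes left_vector_space: "left_vector_space smul"
begin

lemma smul_add_right: "smul a (x + y) = smul a x + smul a y"
  and smul_add_left: "smul (a + b) x = smul a x + smul b x"
  and smul_smul: "smul a (smul b x) = smul (a * b) x"
  and smul_one [simp]: "smul 1 x = x"
  using left_vector_space by (simp_all add: left_vector_space_def)

lemma smul_zero_right [simp]: "smul a 0 = 0"
  using smul_add_right[of a 0 0] by simp

lemma smul_zero_left [simp]: "smul 0 x = 0"
  using smul_add_left[of 0 0 x] by simp

lemma smul_diff_left: "smul (a - b) x = smul a x - smul b x"
  using smul_add_left[of "a - b" b x] by (simp add: algebra_simps)

lemma smul_sum_right: "smul a (\<Sum>i\<in>I. f i) = (\<Sum>i\<in>I. smul a (f i))"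
  by (induct I rule: infinite_finite_induct) (simp_all add: smul_add_right)

lemma smul_of_nat: "smul (of_nat n) x = (\<Sum>i<n. x)"
  by (induct n) (simp_all add: smul_add_left add.commute)

lemma smul_of_nat_commute: "smul (of_nat n) (smul a x) = smul a (smul (of_nat n) x)"
  by (simp add: smul_smul mult_of_nat_commute)

lemma linear_subspace_range_smul: "linear_subspace smul (range (\<lambda>a. smul a x))"
  unfolding linear_subspace_def
  by (auto simp: smul_smul image_iff simp flip: smul_add_left intro: exI[of _ 0])

end

locale haar_averaged_metric =
  fixes smul :: "'k::real_normed_div_algebra \<Rightarrow> 'e::ab_group_add \<Rightarrow> 'e"
    and d :: "'e \<Rightarrow> 'e \<Rightarrow> real"
    and \<mu> :: "'k measure"
  assumes metric_vector_space: "metric_vector_space smul d"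
    and asymp_mult: "asymptotically_multiplicative smul d"
    and haar: "haar_prob_unit_sphere \<mu>"
begin

sublocale left_vector_space_smul smul
  using metric_vector_space by unfold_locales (simp add: metric_vector_space_def)

abbreviation d\<^sub>0 :: "'e \<Rightarrow> 'e \<Rightarrow> real" where "d\<^sub>0 \<equiv> d0 \<mu> smul d"

lemma Metric_space_UNIV: "Metric_space UNIV d"
  using metric_vector_space by (simp add: metric_vector_space_def)

lemma d_nonneg [simp]: "0 \<le> d x y"
  and d_self [simp]: "d x x = 0"
  and d_triangle: "d x z \<le> d x y + d y z"
  using Metric_space.nonneg[OF Metric_space_UNIV] Metric_space.zero[OF Metric_space_UNIV]
    Metric_space.triangle[OF Metric_space_UNIV] by auto

lemma prob_space: "prob_space \<mu>"
  and space_eq: "space \<mu> = {u. norm u = 1}"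
  using haar by (simp_all add: haar_prob_unit_sphere_def)

lemma borel_measurable_dist_smul: "(\<lambda>u. d (smul u x) (smul u y)) \<in> borel_measurable \<mu>"
proof -
  have smul_cont: "continuous_map euclidean (Metric_space.mtopology UNIV d) (\<lambda>a. smul a z)" for z
  proof -
    have pair: "continuous_map euclidean (prod_topology euclidean (Metric_space.mtopology UNIV d)) (\<lambda>a. (a, z))"
      by (intro continuous_map_pairedI continuous_map_id continuous_map_const[THEN iffD2])
        (auto simp: Metric_space.topspace_mtopology[OF Metric_space_UNIV])
    have "continuous_map (prod_topology euclidean (Metric_space.mtopology UNIV d))
        (Metric_space.mtopology UNIV d) (\<lambda>(a, x). smul a x)"
      using metric_vector_space by (simp add: metric_vector_space_def)
    from continuous_map_compose[OF pair this] show ?thesis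
      by (simp add: o_def)
  qed
  have "continuous_map euclidean euclidean (\<lambda>u. mdist (metric (UNIV, d)) (smul u x) (smul u y))"
    by (intro continuous_map_mdist) (simp_all add: Metric_space.mtopology_of[OF Metric_space_UNIV] smul_cont)
  then have "continuous_on UNIV (\<lambda>u. d (smul u x) (smul u y))"
    by (simp add: Metric_space.mdist_metric[OF Metric_space_UNIV])
  then have "(\<lambda>u. d (smul u x) (smul u y)) \<in> borel_measurable (restrict_space borel {u. norm u = 1})"
    by (intro measurable_restrict_space1 borel_measurable_continuous_onI)
  moreover have "sets \<mu> = sets (restrict_space borel {u. norm u = 1})"
    using haar by (simp add: haar_prob_unit_sphere_def)
  ultimately show ?thesis
    by (subst measurable_cong_sets[OF _ refl])
qed

lemma dist_smul_unit_bounds: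
  assumes "C > 1"
  shows "\<exists>B\<ge>0. \<forall>u x y. norm u = 1 \<longrightarrow>
           d x y / C - B \<le> d (smul u x) (smul u y) \<and> d (smul u x) (smul u y) \<le> C * d x y + B"
proof -
  obtain C2 C3 where "C2 \<ge> 0" "C3 \<ge> 0" and bounds: "\<And>l x y.
      d x y * norm l / C - C2 * norm l - C3 \<le> d (smul l x) (smul l y) \<and>
      d (smul l x) (smul l y) \<le> C * norm l * d x y + C2 * norm l + C3"
    using asymp_mult assms unfolding asymptotically_multiplicative_def by blast
  moreover have "d x y / C - (C2 + C3) \<le> d (smul u x) (smul u y) \<and>
      d (smul u x) (smul u y) \<le> C * d x y + (C2 + C3)" if "norm u = 1" for u x y
    using bounds[of x y u] that by simp
  ultimately show ?thesis
    by (intro exI[of _ "C2 + C3"]) auto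
qed

lemma integrable_dist_smul [simp]: "integrable \<mu> (\<lambda>u. d (smul u x) (smul u y))"
proof -
  obtain B where "\<And>u. norm u = 1 \<Longrightarrow> d (smul u x) (smul u y) \<le> 2 * d x y + B"
    using dist_smul_unit_bounds[of 2] by auto
  then have "AE u in \<mu>. norm (d (smul u x) (smul u y)) \<le> 2 * d x y + B"
    by (intro AE_I2) (simp add: space_eq)
  then show ?thesis
    by (rule finite_measure.integrable_const_bound[OF prob_space.finite_measure[OF prob_space] _
          borel_measurable_dist_smul])
qed

lemma integral_affine_dist_smul:
  "(\<integral>u. (\<Sum>i\<in>I. c i * d (smul u (p i)) (smul u (q i))) + b \<partial>\<mu>) = (\<Sum>i\<in>I. c i * d\<^sub>0 (p i) (q i)) + b"
proof -
  have "(\<integral>u. (\<Sum>i\<in>I. c i * d (smul u (p i)) (smul u (q i))) + b \<partial>\<mu>)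
      = (\<integral>u. (\<Sum>i\<in>I. c i * d (smul u (p i)) (smul u (q i))) \<partial>\<mu>) + (\<integral>u. b \<partial>\<mu>)"
    using prob_space.finite_measure[OF prob_space]
    by (intro Bochner_Integration.integral_add Bochner_Integration.integrable_sum
        finite_measure.integrable_const integrable_mult_right integrable_dist_smul)
  then show ?thesis
    by (simp add: d0_def prob_space.prob_space[OF prob_space])
qed

lemma d0_le_sum:
  assumes "\<And>u. norm u = 1 \<Longrightarrow>
    d (smul u x) (smul u y) \<le> (\<Sum>i\<in>I. c i * d (smul u (p i)) (smul u (q i))) + b"
  shows "d\<^sub>0 x y \<le> (\<Sum>i\<in>I. c i * d\<^sub>0 (p i) (q i)) + b"
proof -
  have "d\<^sub>0 x y \<le> (\<integral>u. (\<Sum>i\<in>I. c i * d (smul u (p i)) (smul u (q i))) + b \<partial>\<mu>)"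
    unfolding d0_def
    using assms prob_space.finite_measure[OF prob_space]
    by (intro Bochner_Integration.integral_mono Bochner_Integration.integrable_add
        Bochner_Integration.integrable_sum finite_measure.integrable_const integrable_mult_right
        integrable_dist_smul) (auto simp: space_eq)
  then show ?thesis
    by (simp only: integral_affine_dist_smul)
qed

lemma d0_ge_sum:
  assumes "\<And>u. norm u = 1 \<Longrightarrow>
    (\<Sum>i\<in>I. c i * d (smul u (p i)) (smul u (q i))) + b \<le> d (smul u x) (smul u y)"
  shows "(\<Sum>i\<in>I. c i * d\<^sub>0 (p i) (q i)) + b \<le> d\<^sub>0 x y"
proof -
  have "(\<integral>u. (\<Sum>i\<in>I. c i * d (smul u (p i)) (smul u (q i))) + b \<partial>\<mu>) \<le> d\<^sub>0 x y"
    unfolding d0_def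
    using assms prob_space.finite_measure[OF prob_space]
    by (intro Bochner_Integration.integral_mono Bochner_Integration.integrable_add
        Bochner_Integration.integrable_sum finite_measure.integrable_const integrable_mult_right
        integrable_dist_smul) (auto simp: space_eq)
  then show ?thesis
    by (simp only: integral_affine_dist_smul)
qed

lemma d0_nonneg [simp]: "0 \<le> d\<^sub>0 x y"
  by (simp add: d0_def)

lemma d0_self [simp]: "d\<^sub>0 x x = 0"
  by (simp add: d0_def)

lemma d0_triangle: "d\<^sub>0 x z \<le> d\<^sub>0 x y + d\<^sub>0 y z"
proof -
  have "d\<^sub>0 x z \<le> (\<integral>u. d (smul u x) (smul u y) + d (smul u y) (smul u z) \<partial>\<mu>)"
    unfolding d0_def by (intro Bochner_Integration.integral_mono) (simp_all add: d_triangle)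
  also have "\<dots> = d\<^sub>0 x y + d\<^sub>0 y z"
    unfolding d0_def by (rule Bochner_Integration.integral_add) simp_all
  finally show ?thesis .
qed

lemma d0_unit_invariant:
  assumes "norm v = 1"
  shows "d\<^sub>0 (smul v x) (smul v y) = d\<^sub>0 x y"
  using haar_prob_unit_sphere_integral_mult_right[OF haar assms borel_measurable_dist_smul[of x y]]
  by (simp add: d0_def smul_smul)

lemma asymptotically_isometric_d0: "asymptotically_isometric d\<^sub>0 d"
  unfolding asymptotically_isometric_def
proof (intro allI impI)
  fix C :: real assume "C > 1"
  then obtain B where "B \<ge> 0" and B: "\<And>u x y. norm u = 1 \<Longrightarrow>
      d x y / C - B \<le> d (smul u x) (smul u y) \<and> d (smul u x) (smul u y) \<le> C * d x y + B"
    using dist_smul_unit_bounds by blast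
  have "d x y / C - B \<le> d\<^sub>0 x y \<and> d\<^sub>0 x y \<le> C * d x y + B" for x y
    using d0_le_sum[where I = "{}" and b = "C * d x y + B"] d0_ge_sum[where I = "{}" and b = "d x y / C - B"] B
    by simp
  with \<open>B \<ge> 0\<close> show "\<exists>B\<ge>0. \<forall>x y. d x y / C - B \<le> d\<^sub>0 x y \<and> d\<^sub>0 x y \<le> C * d x y + B"
    by blast
qed

lemma smul_of_real_commute: "smul (of_real t) (smul a x) = smul a (smul (of_real t) x)"
  by (simp add: smul_smul of_real_def)

lemma dist_real_scale_bounds:
  assumes "C > 1"
  shows "\<exists>B\<ge>0. \<forall>t\<ge>0. \<forall>x y.
           t * d x y / C - (B * t + B) \<le> d (smul (of_real t) x) (smul (of_real t) y) \<and>
           d (smul (of_real t) x) (smul (of_real t) y) \<le> C * t * d x y + (B * t + B)"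
proof -
  obtain C2 C3 where C2: "C2 \<ge> 0" and C3: "C3 \<ge> 0" and bounds: "\<And>l x y.
      d x y * norm l / C - C2 * norm l - C3 \<le> d (smul l x) (smul l y) \<and>
      d (smul l x) (smul l y) \<le> C * norm l * d x y + C2 * norm l + C3"
    using asymp_mult assms unfolding asymptotically_multiplicative_def by blast
  have "t * d x y / C - ((C2 + C3) * t + (C2 + C3)) \<le> d (smul (of_real t) x) (smul (of_real t) y) \<and>
      d (smul (of_real t) x) (smul (of_real t) y) \<le> C * t * d x y + ((C2 + C3) * t + (C2 + C3))"
    if "t \<ge> 0" for t x y
  proof -
    have "(C2 + C3) * t + (C2 + C3) = C2 * t + C3 + (C3 * t + C2)"
      by (simp add: algebra_simps)
    moreover have "0 \<le> C3 * t + C2"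
      using C2 C3 that by simp
    ultimately show ?thesis
      using bounds[of x y "of_real t"] that by (simp add: mult.commute)
  qed
  with C2 C3 show ?thesis
    by (intro exI[of _ "C2 + C3"]) simp
qed

lemma d0_real_scale_bounds:
  assumes "C > 1"
  shows "\<exists>B\<ge>0. \<forall>t\<ge>0. \<forall>x y.
           t * d\<^sub>0 x y / C - (B * t + B) \<le> d\<^sub>0 (smul (of_real t) x) (smul (of_real t) y) \<and>
           d\<^sub>0 (smul (of_real t) x) (smul (of_real t) y) \<le> C * t * d\<^sub>0 x y + (B * t + B)"
proof -
  obtain B where "B \<ge> 0" and bounds: "\<And>t x y. t \<ge> 0 \<Longrightarrow>
      t * d x y / C - (B * t + B) \<le> d (smul (of_real t) x) (smul (of_real t) y) \<and>
      d (smul (of_real t) x) (smul (of_real t) y) \<le> C * t * d x y + (B * t + B)"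
    using dist_real_scale_bounds[OF assms] by blast
  have "t * d\<^sub>0 x y / C - (B * t + B) \<le> d\<^sub>0 (smul (of_real t) x) (smul (of_real t) y) \<and>
        d\<^sub>0 (smul (of_real t) x) (smul (of_real t) y) \<le> C * t * d\<^sub>0 x y + (B * t + B)"
    if "t \<ge> 0" for t x y
    using d0_ge_sum[where I = "{()}" and c = "\<lambda>_. t / C" and b = "- (B * t + B)"
        and p = "\<lambda>_. x" and q = "\<lambda>_. y" and x = "smul (of_real t) x" and y = "smul (of_real t) y"]
      d0_le_sum[where I = "{()}" and c = "\<lambda>_. C * t" and b = "B * t + B"
        and p = "\<lambda>_. x" and q = "\<lambda>_. y" and x = "smul (of_real t) x" and y = "smul (of_real t) y"]
      bounds[OF that, of "smul _ x" "smul _ y"]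
    by (simp add: smul_of_real_commute algebra_simps)
  with \<open>B \<ge> 0\<close> show ?thesis
    by blast
qed

end

section \<open>The asymptotic norm\<close>

locale quasi_subadditive_averaged_metric = haar_averaged_metric smul d \<mu>
  for smul :: "'k::real_normed_div_algebra \<Rightarrow> 'e::ab_group_add \<Rightarrow> 'e" and d \<mu> +
  assumes sum_bound: "\<forall>C1>1. \<exists>C0\<ge>0. \<forall>n\<ge>2. \<forall>x y :: nat \<Rightarrow> 'e.
                 d (\<Sum>i<n. x i) (\<Sum>i<n. y i) \<le> C1 * (\<Sum>i<n. d (x i) (y i)) + real n * C0"
begin

abbreviation \<delta>\<^sub>0 :: "'e \<Rightarrow> 'e \<Rightarrow> real" where "\<delta>\<^sub>0 \<equiv> delta0 \<mu> smul d"

lemma d0_sum_bound: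
  assumes "C > 1"
  shows "\<exists>C0\<ge>0. \<forall>n\<ge>2. \<forall>p q :: nat \<Rightarrow> 'e.
           d\<^sub>0 (\<Sum>i<n. p i) (\<Sum>i<n. q i) \<le> C * (\<Sum>i<n. d\<^sub>0 (p i) (q i)) + real n * C0"
proof -
  obtain C0 where "C0 \<ge> 0" and bound: "\<forall>n\<ge>2. \<forall>x y :: nat \<Rightarrow> 'e.
      d (\<Sum>i<n. x i) (\<Sum>i<n. y i) \<le> C * (\<Sum>i<n. d (x i) (y i)) + real n * C0"
    using sum_bound assms by blast
  have "d\<^sub>0 (\<Sum>i<n. p i) (\<Sum>i<n. q i) \<le> C * (\<Sum>i<n. d\<^sub>0 (p i) (q i)) + real n * C0"
    if "n \<ge> 2" for n and p q :: "nat \<Rightarrow> 'e"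
  proof -
    have "d\<^sub>0 (\<Sum>i<n. p i) (\<Sum>i<n. q i) \<le> (\<Sum>i<n. C * d\<^sub>0 (p i) (q i)) + real n * C0"
    proof (rule d0_le_sum)
      fix u :: 'k
      have "d (smul u (\<Sum>i<n. p i)) (smul u (\<Sum>i<n. q i))
          = d (\<Sum>i<n. smul u (p i)) (\<Sum>i<n. smul u (q i))"
        by (simp only: smul_sum_right)
      also have "\<dots> \<le> C * (\<Sum>i<n. d (smul u (p i)) (smul u (q i))) + real n * C0"
        using bound that by blast
      finally show "d (smul u (\<Sum>i<n. p i)) (smul u (\<Sum>i<n. q i))
          \<le> (\<Sum>i<n. C * d (smul u (p i)) (smul u (q i))) + real n * C0"
        by (simp only: sum_distrib_left)
    qed
    then show ?thesis
      by (simp only: sum_distrib_left)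
  qed
  with \<open>C0 \<ge> 0\<close> show ?thesis
    by blast
qed

lemma d0_add_bound:
  assumes "C > 1"
  shows "\<exists>C0\<ge>0. \<forall>a a' b b'. d\<^sub>0 (a + a') (b + b') \<le> C * (d\<^sub>0 a b + d\<^sub>0 a' b') + C0"
proof -
  obtain C0 where "C0 \<ge> 0" and bound: "\<And>p q :: nat \<Rightarrow> 'e.
      d\<^sub>0 (\<Sum>i<2. p i) (\<Sum>i<2. q i) \<le> C * (\<Sum>i<2. d\<^sub>0 (p i) (q i)) + 2 * C0"
    using d0_sum_bound[OF assms] by force
  have "d\<^sub>0 (a + a') (b + b') \<le> C * (d\<^sub>0 a b + d\<^sub>0 a' b') + 2 * C0" for a a' b b'
    using bound[of "\<lambda>i. if i = 0 then a else a'" "\<lambda>i. if i = 0 then b else b'"]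
    by (simp add: numeral_2_eq_2)
  with \<open>C0 \<ge> 0\<close> show ?thesis
    by (intro exI[of _ "2 * C0"]) auto
qed

lemma d0_of_nat_bound:
  assumes "C > 1"
  shows "\<exists>C0\<ge>0. \<forall>k x y.
           d\<^sub>0 (smul (of_nat k) x) (smul (of_nat k) y) \<le> C * real k * d\<^sub>0 x y + real k * C0"
proof -
  obtain C0 where "C0 \<ge> 0" and bound: "\<And>k p q. k \<ge> 2 \<Longrightarrow>
      d\<^sub>0 (\<Sum>i<k. p i) (\<Sum>i<k. q i) \<le> C * (\<Sum>i<k. d\<^sub>0 (p i) (q i)) + real k * C0"
    using d0_sum_bound[OF assms] by blast
  have "d\<^sub>0 (smul (of_nat k) x) (smul (of_nat k) y) \<le> C * real k * d\<^sub>0 x y + real k * C0" for k x y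
  proof (cases "k \<ge> 2")
    case True
    then show ?thesis
      using bound[of k "\<lambda>_. x" "\<lambda>_. y"] by (simp add: smul_of_nat)
  next
    case False
    then consider "k = 0" | "k = 1" by linarith
    then show ?thesis
      using \<open>C0 \<ge> 0\<close> assms mult_right_mono[of 1 C "d\<^sub>0 x y"] by cases simp_all
  qed
  with \<open>C0 \<ge> 0\<close> show ?thesis
    by blast
qed

lemma d0_ratio_tendsto:
  "(\<lambda>n. d\<^sub>0 (smul (of_nat n) x) (smul (of_nat n) y) / real n) \<longlonglongrightarrow> \<delta>\<^sub>0 x y"
proof -
  define b where "b n = d\<^sub>0 (smul (of_nat n) x) (smul (of_nat n) y)" for n
  have "convergent (\<lambda>n. b n / real n)"
  proof (rule convergent_quasi_subadditive_div)
    fix C :: real assume C: "C > 1"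
    obtain C1 where "C1 \<ge> 0" and add: "\<And>a a' b b'. d\<^sub>0 (a + a') (b + b') \<le> C * (d\<^sub>0 a b + d\<^sub>0 a' b') + C1"
      using d0_add_bound[OF C] by blast
    obtain C2 where "C2 \<ge> 0" and mult: "\<And>k x y.
        d\<^sub>0 (smul (of_nat k) x) (smul (of_nat k) y) \<le> C * real k * d\<^sub>0 x y + real k * C2"
      using d0_of_nat_bound[OF C] by blast
    have "b (s + t) \<le> C * (b s + b t) + (C1 + C2)" for s t
      using add[of "smul (of_nat s) x" "smul (of_nat t) x" "smul (of_nat s) y" "smul (of_nat t) y"]
        \<open>C2 \<ge> 0\<close> by (simp add: b_def smul_add_left)
    moreover have "b (k * m) \<le> C * real k * b m + real k * (C1 + C2)" for k m
      using mult[of k "smul (of_nat m) x" "smul (of_nat m) y"] mult_nonneg_nonneg[OF \<open>C1 \<ge> 0\<close>, of "real k"]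
      by (simp add: b_def smul_smul algebra_simps)
    ultimately show "\<exists>C0\<ge>0. (\<forall>s t. b (s + t) \<le> C * (b s + b t) + C0) \<and>
        (\<forall>k m. b (k * m) \<le> C * real k * b m + real k * C0)"
      using \<open>C1 \<ge> 0\<close> \<open>C2 \<ge> 0\<close> by (intro exI[of _ "C1 + C2"]) simp
  qed (simp add: b_def)
  then show ?thesis
    by (simp add: b_def delta0_def convergent_LIMSEQ_iff)
qed

lemma delta0_nonneg: "0 \<le> \<delta>\<^sub>0 x y"
  by (rule LIMSEQ_le_const[OF d0_ratio_tendsto]) simp

lemma delta0_self [simp]: "\<delta>\<^sub>0 x x = 0"
  using d0_ratio_tendsto[of x x] by (simp add: LIMSEQ_const_iff)

lemma delta0_triangle: "\<delta>\<^sub>0 x z \<le> \<delta>\<^sub>0 x y + \<delta>\<^sub>0 y z"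
proof (rule LIMSEQ_le[OF d0_ratio_tendsto tendsto_add[OF d0_ratio_tendsto d0_ratio_tendsto]], intro exI allI impI)
  fix n :: nat
  have "d\<^sub>0 (smul (of_nat n) x) (smul (of_nat n) z) / real n \<le>
      (d\<^sub>0 (smul (of_nat n) x) (smul (of_nat n) y) + d\<^sub>0 (smul (of_nat n) y) (smul (of_nat n) z)) / real n"
    by (rule divide_right_mono[OF d0_triangle]) simp
  then show "d\<^sub>0 (smul (of_nat n) x) (smul (of_nat n) z) / real n \<le>
      d\<^sub>0 (smul (of_nat n) x) (smul (of_nat n) y) / real n + d\<^sub>0 (smul (of_nat n) y) (smul (of_nat n) z) / real n"
    by (simp add: add_divide_distrib)
qed

lemma delta0_le_d0:
  assumes "C > 1"
  shows "\<exists>B\<ge>0. \<forall>x y. \<delta>\<^sub>0 x y \<le> C * d\<^sub>0 x y + B"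
proof -
  obtain B where "B \<ge> 0" and upper: "\<And>k x y.
      d\<^sub>0 (smul (of_nat k) x) (smul (of_nat k) y) \<le> C * real k * d\<^sub>0 x y + real k * B"
    using d0_of_nat_bound[OF assms] by blast
  have "d\<^sub>0 (smul (of_nat n) x) (smul (of_nat n) y) / real n \<le> C * d\<^sub>0 x y + B" if "n \<ge> 1" for n x y
  proof -
    have "d\<^sub>0 (smul (of_nat n) x) (smul (of_nat n) y) / real n \<le> (C * real n * d\<^sub>0 x y + real n * B) / real n"
      using upper[of n x y] by (intro divide_right_mono) simp_all
    also have "\<dots> = C * d\<^sub>0 x y + B"
      using that by (simp add: field_simps)
    finally show ?thesis .
  qed
  then have "\<delta>\<^sub>0 x y \<le> C * d\<^sub>0 x y + B" for x y
    by (intro LIMSEQ_le_const2[OF d0_ratio_tendsto]) auto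
  with \<open>B \<ge> 0\<close> show ?thesis
    by blast
qed

lemma d0_le_delta0:
  assumes "C > 1"
  shows "\<exists>B\<ge>0. \<forall>x y. d\<^sub>0 x y / C - B \<le> \<delta>\<^sub>0 x y"
proof -
  obtain B where "B \<ge> 0" and lower: "\<And>t x y. t \<ge> 0 \<Longrightarrow>
      t * d\<^sub>0 x y / C - (B * t + B) \<le> d\<^sub>0 (smul (of_real t) x) (smul (of_real t) y)"
    using d0_real_scale_bounds[OF assms] by blast
  have "d\<^sub>0 x y / C - B - B / real n \<le> d\<^sub>0 (smul (of_nat n) x) (smul (of_nat n) y) / real n"
    if "n \<ge> 1" for n x y
  proof -
    have "(real n * d\<^sub>0 x y / C - (B * real n + B)) / real n
        \<le> d\<^sub>0 (smul (of_nat n) x) (smul (of_nat n) y) / real n"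
      using lower[of "real n" x y] by (intro divide_right_mono) simp_all
    moreover have "(real n * d\<^sub>0 x y / C - (B * real n + B)) / real n = d\<^sub>0 x y / C - B - B / real n"
      using that by (simp add: field_simps)
    ultimately show ?thesis
      by simp
  qed
  note bound = this
  have lim: "(\<lambda>n. d\<^sub>0 x y / C - B - B / real n) \<longlonglongrightarrow> d\<^sub>0 x y / C - B - 0" for x y
    by (intro tendsto_intros)
  have "d\<^sub>0 x y / C - B - 0 \<le> \<delta>\<^sub>0 x y" for x y
    by (rule LIMSEQ_le[OF lim d0_ratio_tendsto]) (use bound in blast)
  then have "d\<^sub>0 x y / C - B \<le> \<delta>\<^sub>0 x y" for x y
    by simp
  with \<open>B \<ge> 0\<close> show ?thesis
    by blast
qed

lemma asymptotically_isometric_delta0_d0: "asymptotically_isometric \<delta>\<^sub>0 d\<^sub>0"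
  unfolding asymptotically_isometric_def
proof (intro allI impI)
  fix C :: real assume "C > 1"
  obtain B1 where "B1 \<ge> 0" and upper: "\<And>x y. \<delta>\<^sub>0 x y \<le> C * d\<^sub>0 x y + B1"
    using delta0_le_d0[OF \<open>C > 1\<close>] by blast
  obtain B2 where "B2 \<ge> 0" and lower: "\<And>x y. d\<^sub>0 x y / C - B2 \<le> \<delta>\<^sub>0 x y"
    using d0_le_delta0[OF \<open>C > 1\<close>] by blast
  have "d\<^sub>0 x y / C - (B1 + B2) \<le> \<delta>\<^sub>0 x y \<and> \<delta>\<^sub>0 x y \<le> C * d\<^sub>0 x y + (B1 + B2)" for x y
    using upper[of x y] lower[of x y] \<open>B1 \<ge> 0\<close> \<open>B2 \<ge> 0\<close> by linarith
  with \<open>B1 \<ge> 0\<close> \<open>B2 \<ge> 0\<close> show "\<exists>B\<ge>0. \<forall>x y. d\<^sub>0 x y / C - B \<le> \<delta>\<^sub>0 x y \<and> \<delta>\<^sub>0 x y \<le> C * d\<^sub>0 x y + B"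
    by (intro exI[of _ "B1 + B2"]) simp
qed

lemma delta0_translate_le: "\<delta>\<^sub>0 (x + z) (y + z) \<le> \<delta>\<^sub>0 x y"
proof (rule ratio_limit_le[OF d0_ratio_tendsto d0_ratio_tendsto])
  fix C :: real assume "C > 1"
  then obtain C0 where add: "\<And>a a' b b'. d\<^sub>0 (a + a') (b + b') \<le> C * (d\<^sub>0 a b + d\<^sub>0 a' b') + C0"
    using d0_add_bound by blast
  have "d\<^sub>0 (smul (of_nat n) (x + z)) (smul (of_nat n) (y + z))
      \<le> C * d\<^sub>0 (smul (of_nat n) x) (smul (of_nat n) y) + C0" for n
    using add[of "smul (of_nat n) x" "smul (of_nat n) z" "smul (of_nat n) y" "smul (of_nat n) z"]
    by (simp add: smul_add_right)
  then show "\<exists>e. \<forall>n. d\<^sub>0 (smul (of_nat n) (x + z)) (smul (of_nat n) (y + z))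
                   \<le> C * d\<^sub>0 (smul (of_nat n) x) (smul (of_nat n) y) + e"
    by blast
qed

lemma delta0_translate: "\<delta>\<^sub>0 (x + z) (y + z) = \<delta>\<^sub>0 x y"
  using delta0_translate_le delta0_translate_le[of "x + z" "- z" "y + z"]
  by (simp add: order_antisym)

lemma delta0_diff: "\<delta>\<^sub>0 x y = \<delta>\<^sub>0 (x - y) 0"
  using delta0_translate[of "x - y" y 0] by simp

lemma delta0_unit_invariant:
  assumes "norm v = 1"
  shows "\<delta>\<^sub>0 (smul v x) (smul v y) = \<delta>\<^sub>0 x y"
  by (simp add: delta0_def smul_of_nat_commute d0_unit_invariant[OF assms])

lemma delta0_real_scale:
  assumes t: "t \<ge> 0"
  shows "\<delta>\<^sub>0 (smul (of_real t) x) (smul (of_real t) y) = t * \<delta>\<^sub>0 x y"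
proof -
  have scaled: "(\<lambda>n. t * d\<^sub>0 (smul (of_nat n) x) (smul (of_nat n) y) / real n) \<longlonglongrightarrow> t * \<delta>\<^sub>0 x y"
    using tendsto_mult_left[OF d0_ratio_tendsto, of t x y] by (simp add: mult.assoc)
  have commute: "smul (of_nat n) (smul (of_real t) z) = smul (of_real t) (smul (of_nat n) z)" for n z
    by (simp add: smul_of_real_commute)
  have bounds: "\<exists>B. \<forall>n.
      t * d\<^sub>0 (smul (of_nat n) x) (smul (of_nat n) y) / C - B
        \<le> d\<^sub>0 (smul (of_nat n) (smul (of_real t) x)) (smul (of_nat n) (smul (of_real t) y)) \<and>
      d\<^sub>0 (smul (of_nat n) (smul (of_real t) x)) (smul (of_nat n) (smul (of_real t) y))
        \<le> C * (t * d\<^sub>0 (smul (of_nat n) x) (smul (of_nat n) y)) + B"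
    if "C > 1" for C
    using d0_real_scale_bounds[OF that] t by (fastforce simp: commute mult.assoc)
  show ?thesis
  proof (rule order_antisym)
    show "\<delta>\<^sub>0 (smul (of_real t) x) (smul (of_real t) y) \<le> t * \<delta>\<^sub>0 x y"
      using bounds by (intro ratio_limit_le[OF d0_ratio_tendsto scaled]) blast
    show "t * \<delta>\<^sub>0 x y \<le> \<delta>\<^sub>0 (smul (of_real t) x) (smul (of_real t) y)"
    proof (rule ratio_limit_le[OF scaled d0_ratio_tendsto])
      fix C :: real assume "C > 1"
      then obtain B where "\<And>n. t * d\<^sub>0 (smul (of_nat n) x) (smul (of_nat n) y) / C - B
          \<le> d\<^sub>0 (smul (of_nat n) (smul (of_real t) x)) (smul (of_nat n) (smul (of_real t) y))"
        using bounds by blast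
      with \<open>C > 1\<close> show "\<exists>e. \<forall>n. t * d\<^sub>0 (smul (of_nat n) x) (smul (of_nat n) y)
          \<le> C * d\<^sub>0 (smul (of_nat n) (smul (of_real t) x)) (smul (of_nat n) (smul (of_real t) y)) + e"
        by (intro exI[of _ "C * B"]) (auto simp: field_simps)
    qed
  qed
qed

lemma delta0_smul: "\<delta>\<^sub>0 (smul a x) (smul a y) = norm a * \<delta>\<^sub>0 x y"
proof (cases "a = 0")
  case False
  define v where "v = of_real (inverse (norm a)) * a"
  have v: "norm v = 1" and a: "a = of_real (norm a) * v"
    using False by (simp_all add: v_def norm_mult norm_inverse flip: mult.assoc)
  have "\<delta>\<^sub>0 (smul a x) (smul a y) = \<delta>\<^sub>0 (smul (of_real (norm a)) (smul v x)) (smul (of_real (norm a)) (smul v y))"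
    by (simp add: smul_smul flip: a)
  also have "\<dots> = norm a * \<delta>\<^sub>0 x y"
    by (simp add: delta0_real_scale delta0_unit_invariant[OF v])
  finally show ?thesis .
qed simp

lemma asymptotically_isometric_delta0_diff_d0: "asymptotically_isometric (\<lambda>x y. \<delta>\<^sub>0 (x - y) 0) d\<^sub>0"
  using asymptotically_isometric_delta0_d0 by (simp flip: delta0_diff)

lemma asymptotically_isometric_delta0_diff_d: "asymptotically_isometric (\<lambda>x y. \<delta>\<^sub>0 (x - y) 0) d"
  using asymptotically_isometric_delta0_diff_d0 asymptotically_isometric_d0
  by (rule asymptotically_isometric_trans)

lemma bounded_span_if_delta0_eq_0:
  assumes "\<delta>\<^sub>0 x 0 = 0"
  shows "\<exists>B. \<forall>p\<in>range (\<lambda>a. smul a x). \<forall>q\<in>range (\<lambda>a. smul a x). d p q \<le> B"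
proof -
  obtain B where B: "\<And>p q. d p q / 2 - B \<le> \<delta>\<^sub>0 (p - q) 0"
    using asymptotically_isometric_delta0_diff_d[unfolded asymptotically_isometric_def, rule_format, of 2]
    by auto
  have "\<delta>\<^sub>0 (smul a x - smul b x) 0 = 0" for a b
    using delta0_smul[of "a - b" x 0] assms by (simp add: smul_diff_left)
  then have "d (smul a x) (smul b x) \<le> 2 * B" for a b
    using B[of "smul a x" "smul b x"] by simp
  then show ?thesis
    by blast
qed

lemma is_norm_delta0:
  assumes definite: "\<And>x. \<delta>\<^sub>0 x 0 = 0 \<Longrightarrow> x = 0"
  shows "is_norm smul (\<lambda>x. \<delta>\<^sub>0 x 0)"
  unfolding is_norm_def
proof (intro conjI allI)
  show "\<delta>\<^sub>0 (x + y) 0 \<le> \<delta>\<^sub>0 x 0 + \<delta>\<^sub>0 y 0" for x y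
  proof -
    have "\<delta>\<^sub>0 (x + y) y = \<delta>\<^sub>0 x 0"
      using delta0_translate[of x y 0] by simp
    then show ?thesis
      using delta0_triangle[of "x + y" 0 y] by linarith
  qed
qed (use delta0_nonneg delta0_smul[of _ _ 0] definite in auto)

end

theorem proposition9:
  fixes smul :: "'k::real_normed_div_algebra \<Rightarrow> 'e::ab_group_add \<Rightarrow> 'e"
    and d :: "'e \<Rightarrow> 'e \<Rightarrow> real"
    and \<mu> :: "'k measure"
  assumes mvs: "metric_vector_space smul d"
    and am: "asymptotically_multiplicative smul d"
    and unb: "\<And>F. linear_subspace smul F \<Longrightarrow> F \<noteq> {0} \<Longrightarrow> \<not> (\<exists>B. \<forall>x\<in>F. \<forall>y\<in>F. d x y \<le> B)"
    and sumc: "\<forall>C1>1. \<exists>C0\<ge>0. \<forall>n\<ge>2. \<forall>x y :: nat \<Rightarrow> 'e.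
                 d (\<Sum>i<n. x i) (\<Sum>i<n. y i) \<le> C1 * (\<Sum>i<n. d (x i) (y i)) + real n * C0"
    and haar: "haar_prob_unit_sphere \<mu>"
  shows "(\<forall>x y z. delta0 \<mu> smul d (x + z) (y + z) = delta0 \<mu> smul d x y) \<and>
         is_norm smul (\<lambda>x. delta0 \<mu> smul d x 0) \<and>
         (\<forall>x y. delta0 \<mu> smul d x y = delta0 \<mu> smul d (x - y) 0) \<and>
         asymptotically_isometric (\<lambda>x y. delta0 \<mu> smul d (x - y) 0) (d0 \<mu> smul d) \<and>
         asymptotically_isometric (\<lambda>x y. delta0 \<mu> smul d (x - y) 0) d"
proof -
  interpret quasi_subadditive_averaged_metric smul d \<mu>
    using mvs am haar sumc by unfold_locales
  have definite: "x = 0" if "\<delta>\<^sub>0 x 0 = 0" for x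
  proof (rule ccontr)
    assume "x \<noteq> 0"
    then have "range (\<lambda>a. smul a x) \<noteq> {0}"
      by (metis rangeI singletonD smul_one)
    then show False
      using unb[OF linear_subspace_range_smul] bounded_span_if_delta0_eq_0[OF that] by blast
  qed
  show ?thesis
    using delta0_translate delta0_diff is_norm_delta0[OF definite]
      asymptotically_isometric_delta0_diff_d0 asymptotically_isometric_delta0_diff_d
    by blast
qed

end
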